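(* Let $\phi:\mathbb{R}^{n\times n}\to\mathbb{R}$ be twice differentiable and convex, let $f(X)=\phi(XX^T)$ for $X\in\mathbb{R}^{n\times r}$, and let $X^\star$ be a global minimizer of $f$. If $X\in\mathbb{R}^{n\times r}$ satisfies $\lambda_{\min}(X^TX)\le\epsilon_\lambda$ and \[ \langle\nabla f(X),V\rangle\le\epsilon_g\|V\|_F,\qquad\langle\nabla^2f(X)[V],V\rangle\ge-\epsilon_H\|V\|_F^2\qquad\text{for all }V\in\mathbb{R}^{n\times r}, \] where $\epsilon_g,\epsilon_H,\epsilon_\lambda\ge0$, then \[ f(X)-f(X^\star)\le C_g\epsilon_g+C_H\epsilon_H+C_\lambda\epsilon_\lambda, \] where $C_g=\tfrac12\|X\|_F$, $C_H=\tfrac12\|X^\star\|_F^2$ and $C_\lambda=2\|\nabla^2\phi(XX^T)\|\,\|X^\star\|_F^2$.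
   Context: $\langle A,B\rangle=\operatorname{tr}(A^TB)$, $\|\cdot\|_F$ is the Frobenius norm, $\nabla^2f(X)[V]$ denotes the Hessian of $f$ at $X$ applied to $V$, and $\|\nabla^2\phi(XX^T)\|$ is the operator norm of the Hessian of $\phi$ at $XX^T$ viewed as a linear map on $\mathbb{R}^{n\times n}$ with the Frobenius norm. *)

theory Defs
  imports "HOL-Analysis.Analysis"
begin

text \<open>Smallest eigenvalue of a (symmetric) real square matrix: the minimum over
  the (finite, nonempty for symmetric matrices) set of real eigenvalues.\<close>
definition lambda_min :: "real^'r^'r \<Rightarrow> real" where
  "lambda_min A = Min {l. \<exists>v. v \<noteq> 0 \<and> A *v v = l *\<^sub>R v}"

end

theory Submission
  imports Defs
begin

text \<open>
  Write \<open>L = \<nabla>\<phi>(XX\<^sup>T)\<close> and \<open>H = \<nabla>\<^sup>2\<phi>(XX\<^sup>T)\<close>. By the chain rule,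
  \<open>\<langle>\<nabla>f(X), V\<rangle> = L(XV\<^sup>T + VX\<^sup>T)\<close> and \<open>\<nabla>\<^sup>2f(X)[V,V] = H(B,B) + 2 L(VV\<^sup>T)\<close>
  with \<open>B = XV\<^sup>T + VX\<^sup>T\<close>. Convexity of \<open>\<phi>\<close> bounds \<open>f(X) - f(X\<^sup>\<star>)\<close> by
  \<open>L(XX\<^sup>T) - L(X\<^sup>\<star>X\<^sup>\<star>\<^sup>T)\<close>, and the gradient condition in the direction \<open>V = X\<close>
  bounds \<open>2 L(XX\<^sup>T)\<close> by \<open>\<epsilon>\<^sub>g\<parallel>X\<parallel>\<close>. For the second term take a unit eigenvector \<open>u\<close>
  of \<open>X\<^sup>TX\<close> for \<open>\<lambda>\<^sub>m\<^sub>i\<^sub>n\<close>, so that \<open>\<parallel>Xu\<parallel>\<^sup>2 = \<lambda>\<^sub>m\<^sub>i\<^sub>n\<close>, and test the Hessian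
  condition in the rank-one directions \<open>V\<^sub>j = x\<^sub>j u\<^sup>T\<close>, where \<open>x\<^sub>j\<close> are the columns of
  \<open>X\<^sup>\<star>\<close>: then \<open>\<parallel>B\<parallel> \<le> 2\<parallel>Xu\<parallel>\<parallel>x\<^sub>j\<parallel>\<close>, so the \<open>H\<close>-term is at most
  \<open>4\<lambda>\<^sub>m\<^sub>i\<^sub>n\<parallel>H\<parallel>\<parallel>x\<^sub>j\<parallel>\<^sup>2\<close>, while the \<open>V\<^sub>jV\<^sub>j\<^sup>T\<close> add up to \<open>X\<^sup>\<star>X\<^sup>\<star>\<^sup>T\<close>.
\<close>

lemma convex_on_has_derivative_ge:
  fixes \<phi> :: "'a::real_normed_vector \<Rightarrow> real"
  assumes "convex_on UNIV \<phi>" "(\<phi> has_derivative L) (at a)"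
  shows "\<phi> a + L (b - a) \<le> \<phi> b"
proof -
  define k where "k t = \<phi> (a + t *\<^sub>R (b - a))" for t :: real
  have "convex_on UNIV k"
  proof (rule convex_onI)
    fix u x y :: real assume "0 < u" "u < 1"
    have "a + ((1 - u) *\<^sub>R x + u *\<^sub>R y) *\<^sub>R (b - a) =
       (1 - u) *\<^sub>R (a + x *\<^sub>R (b - a)) + u *\<^sub>R (a + y *\<^sub>R (b - a))"
      by (simp add: algebra_simps)
    with \<open>0 < u\<close> \<open>u < 1\<close> show "k ((1 - u) *\<^sub>R x + u *\<^sub>R y) \<le> (1 - u) * k x + u * k y"
      unfolding k_def by (auto intro!: convex_onD[OF assms(1)])
  qed auto
  moreover have "(k has_field_derivative L (b - a)) (at 0)"
  proof -
    have "((\<lambda>t. a + t *\<^sub>R (b - a)) has_derivative (\<lambda>s. s *\<^sub>R (b - a))) (at 0)"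
      by (auto intro!: derivative_eq_intros)
    from has_derivative_compose[OF this] assms(2)
    have "(k has_derivative (\<lambda>s. L (s *\<^sub>R (b - a)))) (at 0)"
      unfolding k_def by simp
    then show ?thesis
      unfolding has_field_derivative_def
      by (rule has_derivative_eq_rhs)
        (simp add: fun_eq_iff linear_scale[OF has_derivative_linear[OF assms(2)]])
  qed
  ultimately have "L (b - a) \<le> k 1 - k 0"
    using convex_on_imp_above_tangent[of UNIV k 0 1] by simp
  then show ?thesis by (simp add: k_def)
qed

lemma bounded_bilinear_mult_transpose:
  "bounded_bilinear (\<lambda>(A::real^'k^'m) (B::real^'k^'n). A ** transpose B)"
proof -
  have "bilinear (\<lambda>(A::real^'k^'m) (B::real^'k^'n). A ** transpose B)"
    unfolding bilinear_def
    by (auto intro!: linearI simp: vec_eq_iff matrix_matrix_mult_def transpose_def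
        sum_distrib_left algebra_simps sum.distrib)
  then show ?thesis by (simp add: bilinear_conv_bounded_bilinear)
qed

lemmas has_derivative_mult_transpose [derivative_intros] =
  bounded_bilinear.FDERIV[OF bounded_bilinear_mult_transpose]

lemma has_derivative_gram:
  "((\<lambda>Z::real^'k^'n. Z ** transpose Z) has_derivative
     (\<lambda>V. Z ** transpose V + V ** transpose Z)) (at Z)"
  by (auto intro!: derivative_eq_intros)

lemma has_derivative_comp_gram:
  fixes \<phi> :: "real^'n^'n \<Rightarrow> 'a::real_normed_vector"
  assumes "(\<phi> has_derivative \<phi>') (at (Z ** transpose Z))"
  shows "((\<lambda>Z. \<phi> (Z ** transpose Z)) has_derivative
           (\<lambda>V. \<phi>' (Z ** transpose V + V ** transpose Z))) (at Z)"
  using has_derivative_compose[OF has_derivative_gram assms] .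

lemma derivative_comp_gram_eq:
  fixes Z :: "real^'k^'n"
  assumes "\<And>Z. f Z = \<phi> (Z ** transpose Z)"
    and "(\<phi> has_derivative \<phi>') (at (Z ** transpose Z))"
    and "(f has_derivative f') (at Z)"
  shows "f' V = \<phi>' (Z ** transpose V + V ** transpose Z)"
proof -
  have "f = (\<lambda>Z. \<phi> (Z ** transpose Z))" using assms(1) by auto
  with has_derivative_comp_gram[OF assms(2)] have "(f has_derivative
      (\<lambda>V. \<phi>' (Z ** transpose V + V ** transpose Z))) (at Z)" by simp
  with has_derivative_unique[OF assms(3)] show ?thesis by simp
qed

lemma second_derivative_comp_gram_eq:
  fixes \<phi> :: "real^'n^'n \<Rightarrow> real" and X :: "real^'k^'n"
  assumes f_eq: "\<And>Z. f Z = \<phi> (Z ** transpose Z)"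
    and \<phi>_d1: "\<And>Y. (\<phi> has_derivative blinfun_apply (\<phi>' Y)) (at Y)"
    and \<phi>_d2: "(\<phi>' has_derivative \<phi>'') (at (X ** transpose X))"
    and f_d1: "\<And>Z. (f has_derivative blinfun_apply (f' Z)) (at Z)"
    and f_d2: "(f' has_derivative f'') (at X)"
  shows "f'' W V = \<phi>'' (X ** transpose W + W ** transpose X) (X ** transpose V + V ** transpose X)
           + \<phi>' (X ** transpose X) (W ** transpose V + V ** transpose W)"
proof -
  have f'_eq: "(\<lambda>Z. f' Z V) = (\<lambda>Z. \<phi>' (Z ** transpose Z) (Z ** transpose V + V ** transpose Z))"
    using derivative_comp_gram_eq[OF f_eq \<phi>_d1 f_d1] by auto
  have f'_V: "((\<lambda>Z. f' Z V) has_derivative (\<lambda>W. f'' W V)) (at X)"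
    using blinfun.FDERIV[OF f_d2 has_derivative_const[of V]] by simp
  have "((\<lambda>Z. Z ** transpose V + V ** transpose Z) has_derivative
      (\<lambda>W. W ** transpose V + V ** transpose W)) (at X)"
    by (rule has_derivative_eq_rhs[OF has_derivative_add[OF
          has_derivative_mult_transpose[OF has_derivative_ident has_derivative_const]
          has_derivative_mult_transpose[OF has_derivative_const has_derivative_ident]]])
      (simp add: bounded_bilinear.zero_left[OF bounded_bilinear_mult_transpose]
        bounded_bilinear.zero_right[OF bounded_bilinear_mult_transpose])
  from blinfun.FDERIV[OF has_derivative_comp_gram[OF \<phi>_d2] this]
  have "((\<lambda>Z. f' Z V) has_derivative
      (\<lambda>W. \<phi>' (X ** transpose X) (W ** transpose V + V ** transpose W)
           + \<phi>'' (X ** transpose W + W ** transpose X) (X ** transpose V + V ** transpose X))) (at X)"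
    unfolding f'_eq .
  from fun_cong[OF has_derivative_unique[OF f'_V this], of W] show ?thesis
    by (simp add: add.commute)
qed

lemma symmetric_matrix_inner_commute:
  fixes A :: "real^'k^'k"
  assumes "transpose A = A"
  shows "(A *v x) \<bullet> y = x \<bullet> (A *v y)"
  by (metis assms dot_lmul_matrix vector_transpose_matrix)

lemma finite_eigenvalues_symmetric:
  fixes A :: "real^'k^'k"
  assumes "transpose A = A"
  shows "finite {l. \<exists>v. v \<noteq> 0 \<and> A *v v = l *\<^sub>R v}"
proof -
  define S where "S = {l. \<exists>v. v \<noteq> 0 \<and> A *v v = l *\<^sub>R v}"
  define ev where "ev l = (SOME v. v \<noteq> 0 \<and> A *v v = l *\<^sub>R v)" for l
  have ev: "ev l \<noteq> 0 \<and> A *v ev l = l *\<^sub>R ev l" if "l \<in> S" for l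
    using that someI_ex[of "\<lambda>v. v \<noteq> 0 \<and> A *v v = l *\<^sub>R v"] unfolding S_def ev_def by auto
  have "inj_on ev S"
  proof (rule inj_onI)
    fix l1 l2 assume l: "l1 \<in> S" "l2 \<in> S" "ev l1 = ev l2"
    then have "l1 *\<^sub>R ev l1 = l2 *\<^sub>R ev l1" using ev by metis
    then show "l1 = l2" using ev[OF l(1)] by simp
  qed
  moreover have "pairwise orthogonal (ev ` S)"
  proof (rule pairwiseI)
    fix x y assume "x \<in> ev ` S" "y \<in> ev ` S" "x \<noteq> y"
    then obtain l1 l2 where l: "l1 \<in> S" "l2 \<in> S" "x = ev l1" "y = ev l2" "l1 \<noteq> l2" by auto
    have "l1 * (x \<bullet> y) = (A *v x) \<bullet> y" using ev[OF l(1)] l by simp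
    also have "\<dots> = x \<bullet> (A *v y)" by (rule symmetric_matrix_inner_commute[OF assms])
    also have "\<dots> = l2 * (x \<bullet> y)" using ev[OF l(2)] l by simp
    finally show "orthogonal x y" using l(5) by (simp add: orthogonal_def)
  qed
  moreover have "0 \<notin> ev ` S" using ev by auto
  ultimately have "finite S"
    using pairwise_orthogonal_independent independent_bound finite_imageD by metis
  then show ?thesis by (simp add: S_def)
qed

lemma quadratic_nonneg_imp_linear_coeff_zero:
  fixes b c :: real
  assumes "\<And>t. 0 \<le> 2 * t * b + t\<^sup>2 * c"
  shows "b = 0"
proof (rule ccontr)
  assume "b \<noteq> 0"
  define d where "d = \<bar>c\<bar> + 1"
  have "d > 0" "c < d" by (auto simp: d_def)
  have "2 * (- b / d) * b + (- b / d)\<^sup>2 * c = (b\<^sup>2 / d) * (c / d - 2)"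
    using \<open>d > 0\<close> by (simp add: field_simps power2_eq_square)
  also have "\<dots> < 0"
    using \<open>b \<noteq> 0\<close> \<open>d > 0\<close> \<open>c < d\<close> by (intro mult_pos_neg) (auto simp: divide_less_eq)
  finally show False using assms[of "- b / d"] by simp
qed

lemma rayleigh_minimizer_eigenvector:
  fixes A :: "real^'k^'k"
  assumes sym: "transpose A = A"
    and lower: "\<And>y. l * (y \<bullet> y) \<le> y \<bullet> (A *v y)"
    and attained: "u \<bullet> (A *v u) = l * (u \<bullet> u)"
  shows "A *v u = l *\<^sub>R u"
proof -
  define w where "w = A *v u - l *\<^sub>R u"
  have "0 \<le> 2 * t * (w \<bullet> w) + t\<^sup>2 * (w \<bullet> (A *v w) - l * (w \<bullet> w))" for t
  proof -
    have "(u + t *\<^sub>R w) \<bullet> (A *v (u + t *\<^sub>R w)) - l * ((u + t *\<^sub>R w) \<bullet> (u + t *\<^sub>R w))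
        = 2 * t * (w \<bullet> w) + t\<^sup>2 * (w \<bullet> (A *v w) - l * (w \<bullet> w))"
      using attained symmetric_matrix_inner_commute[OF sym, of w u]
      by (simp add: w_def matrix_vector_right_distrib matrix_vector_mult_scaleR inner_add_left
          inner_add_right inner_diff_left inner_diff_right inner_commute power2_eq_square
          algebra_simps)
    then show ?thesis using lower[of "u + t *\<^sub>R w"] by simp
  qed
  then have "w \<bullet> w = 0" by (rule quadratic_nonneg_imp_linear_coeff_zero)
  then show ?thesis by (simp add: w_def)
qed

lemma eigenvalue_exists_symmetric:
  fixes A :: "real^'k^'k"
  assumes "transpose A = A"
  shows "\<exists>l v. v \<noteq> 0 \<and> A *v v = l *\<^sub>R v"
proof -
  define q where "q x = x \<bullet> (A *v x)" for x
  have "continuous_on (sphere 0 1) q" unfolding q_def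
    by (intro continuous_intros linear_continuous_on matrix_vector_mul_bounded_linear)
  moreover have "sphere (0::real^'k) 1 \<noteq> {}" by simp
  ultimately obtain u where u: "u \<in> sphere 0 1" and umin: "\<And>y. y \<in> sphere 0 1 \<Longrightarrow> q u \<le> q y"
    using continuous_attains_inf[OF compact_sphere] by blast
  have "q u * (y \<bullet> y) \<le> q y" for y
  proof (cases "y = 0")
    case False
    have "q u \<le> q ((1 / norm y) *\<^sub>R y)" using False by (intro umin) simp
    also have "\<dots> = q y / (y \<bullet> y)"
      by (simp add: q_def matrix_vector_mult_scaleR power2_norm_eq_inner[symmetric]
          power2_eq_square)
    finally show ?thesis using False by (simp add: pos_le_divide_eq)
  qed (simp add: q_def)
  moreover have "u \<bullet> u = 1" using u by (simp add: power2_norm_eq_inner[symmetric])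
  ultimately have "A *v u = q u *\<^sub>R u"
    by (intro rayleigh_minimizer_eigenvector[OF assms]) (simp_all add: q_def)
  moreover have "u \<noteq> 0" using u by auto
  ultimately show ?thesis by blast
qed

lemma lambda_min_unit_eigenvector:
  fixes A :: "real^'k^'k"
  assumes "transpose A = A"
  obtains u where "norm u = 1" "A *v u = lambda_min A *\<^sub>R u"
proof -
  let ?S = "{l. \<exists>v. v \<noteq> 0 \<and> A *v v = l *\<^sub>R v}"
  have "lambda_min A \<in> ?S"
    unfolding lambda_min_def using finite_eigenvalues_symmetric[OF assms]
      eigenvalue_exists_symmetric[OF assms] by (intro Min_in) auto
  then obtain v where "v \<noteq> 0" "A *v v = lambda_min A *\<^sub>R v" by blast
  then show thesis
    by (intro that[of "(1 / norm v) *\<^sub>R v"]) (simp_all add: matrix_vector_mult_scaleR)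
qed

lemma lambda_min_gram_witness:
  fixes X :: "real^'k^'n"
  obtains u where "norm u = 1" "(norm (X *v u))\<^sup>2 = lambda_min (transpose X ** X)"
proof -
  let ?A = "transpose X ** X"
  obtain u where u: "norm u = 1" "?A *v u = lambda_min ?A *\<^sub>R u"
    using lambda_min_unit_eigenvector[of ?A] by (auto simp: matrix_transpose_mul)
  have "(norm (X *v u))\<^sup>2 = u \<bullet> (?A *v u)"
    by (simp add: power2_norm_eq_inner matrix_vector_mul_assoc[symmetric])
      (metis dot_lmul_matrix inner_commute)
  also have "\<dots> = lambda_min ?A"
    using u by (simp add: power2_norm_eq_inner[symmetric])
  finally show thesis using u(1) that by blast
qed

definition outer_product :: "real^'m \<Rightarrow> real^'k \<Rightarrow> real^'k^'m" where
  "outer_product a b = (\<chi> i j. a$i * b$j)"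

lemma norm_outer_product: "norm (outer_product a b) = norm a * norm b"
proof -
  have "(norm (outer_product a b))\<^sup>2 = (norm a * norm b)\<^sup>2"
    unfolding power2_norm_eq_inner power_mult_distrib
    by (simp add: inner_vec_def outer_product_def sum_product mult_ac) (rule sum.swap)
  then show ?thesis by (simp add: power2_eq_iff_nonneg)
qed

lemma matrix_mult_transpose_outer_product:
  "X ** transpose (outer_product z u) = outer_product (X *v u) z"
  by (simp add: vec_eq_iff matrix_matrix_mult_def transpose_def outer_product_def
      matrix_vector_mult_def sum_distrib_left mult_ac)

lemma outer_product_mult_transpose:
  "outer_product z u ** transpose X = outer_product z (X *v u)"
  by (simp add: vec_eq_iff matrix_matrix_mult_def transpose_def outer_product_def
      matrix_vector_mult_def sum_distrib_left mult_ac)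

lemma outer_product_mult_transpose_outer_product:
  "outer_product a u ** transpose (outer_product b u) = (u \<bullet> u) *\<^sub>R outer_product a b"
  by (simp add: vec_eq_iff matrix_matrix_mult_def transpose_def outer_product_def inner_vec_def
      sum_distrib_left sum_distrib_right mult_ac)

lemma sum_outer_product_columns:
  "(\<Sum>j\<in>UNIV. outer_product (column j M) (column j M)) = M ** transpose M"
  by (simp add: vec_eq_iff matrix_matrix_mult_def transpose_def outer_product_def column_def)

lemma sum_norm_column_squared:
  fixes M :: "real^'k^'m"
  shows "(\<Sum>j\<in>UNIV. (norm (column j M))\<^sup>2) = (norm M)\<^sup>2"
  unfolding power2_norm_eq_inner by (simp add: inner_vec_def column_def) (rule sum.swap)

lemma blinfun_quadratic_form_le:
  fixes H :: "'a::real_normed_vector \<Rightarrow>\<^sub>L 'a \<Rightarrow>\<^sub>L real"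
  shows "H x x \<le> norm H * (norm x)\<^sup>2"
proof -
  have "H x x \<le> norm (blinfun_apply H x) * norm x"
    using norm_blinfun[of "blinfun_apply H x" x] by simp
  also have "\<dots> \<le> norm H * norm x * norm x"
    by (intro mult_right_mono norm_blinfun) auto
  finally show ?thesis by (simp add: power2_eq_square mult_ac)
qed

lemma norm_gram_derivative_outer_product_le:
  "norm (X ** transpose (outer_product z u) + outer_product z u ** transpose X)
     \<le> 2 * norm (X *v u) * norm z"
  using norm_triangle_ineq[of "outer_product (X *v u) z" "outer_product z (X *v u)"]
  by (simp add: matrix_mult_transpose_outer_product outer_product_mult_transpose
      norm_outer_product mult_ac)

lemma gram_lower_bound_of_hessian_lower_bound:
  fixes L :: "(real^'n^'n) \<Rightarrow>\<^sub>L real"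
    and H :: "(real^'n^'n) \<Rightarrow>\<^sub>L ((real^'n^'n) \<Rightarrow>\<^sub>L real)"
    and X Y :: "real^'r^'n"
  assumes hess: "\<And>V. - \<epsilon> * (norm V)\<^sup>2 \<le>
      H (X ** transpose V + V ** transpose X) (X ** transpose V + V ** transpose X)
      + 2 * L (V ** transpose V)"
  shows "- 2 * L (Y ** transpose Y)
           \<le> (\<epsilon> + 4 * lambda_min (transpose X ** X) * norm H) * (norm Y)\<^sup>2"
proof -
  define lam where "lam = lambda_min (transpose X ** X)"
  obtain u where u: "norm u = 1" "(norm (X *v u))\<^sup>2 = lam"
    using lambda_min_gram_witness unfolding lam_def by blast
  define V where "V j = outer_product (column j Y) u" for j
  have column_bound: "- 2 * L (V j ** transpose (V j)) \<le> (\<epsilon> + 4 * lam * norm H) * (norm (column j Y))\<^sup>2"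
    for j
  proof -
    define B where "B = X ** transpose (V j) + V j ** transpose X"
    have "norm B \<le> 2 * norm (X *v u) * norm (column j Y)"
      unfolding B_def V_def by (rule norm_gram_derivative_outer_product_le)
    then have "(norm B)\<^sup>2 \<le> (2 * norm (X *v u) * norm (column j Y))\<^sup>2"
      by (rule power_mono) simp
    also have "\<dots> = 4 * lam * (norm (column j Y))\<^sup>2"
      using u(2) by (simp add: power_mult_distrib)
    finally have "(norm B)\<^sup>2 \<le> 4 * lam * (norm (column j Y))\<^sup>2" .
    then have "H B B \<le> norm H * (4 * lam * (norm (column j Y))\<^sup>2)"
      using blinfun_quadratic_form_le[of H B] by (meson mult_left_mono norm_ge_zero order_trans)
    moreover have "norm (V j) = norm (column j Y)"
      using u(1) by (simp add: V_def norm_outer_product)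
    ultimately show ?thesis using hess[of "V j"] by (simp add: B_def algebra_simps)
  qed
  have sum_V: "(\<Sum>j\<in>UNIV. V j ** transpose (V j)) = Y ** transpose Y"
    using u(1) by (simp add: V_def outer_product_mult_transpose_outer_product
        power2_norm_eq_inner[symmetric] sum_outer_product_columns)
  have "- 2 * L (Y ** transpose Y) = (\<Sum>j\<in>UNIV. - 2 * L (V j ** transpose (V j)))"
    by (simp flip: sum_V add: blinfun.sum_right sum_distrib_left sum_negf)
  also have "\<dots> \<le> (\<Sum>j\<in>UNIV. (\<epsilon> + 4 * lam * norm H) * (norm (column j Y))\<^sup>2)"
    by (intro sum_mono column_bound)
  also have "\<dots> = (\<epsilon> + 4 * lam * norm H) * (norm Y)\<^sup>2"
    by (simp add: sum_distrib_left[symmetric] sum_norm_column_squared)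
  finally show ?thesis unfolding lam_def .
qed

theorem proposition10:
  fixes \<phi> :: "real^'n^'n \<Rightarrow> real"
    and \<phi>' :: "real^'n^'n \<Rightarrow> ((real^'n^'n) \<Rightarrow>\<^sub>L real)"
    and \<phi>'' :: "real^'n^'n \<Rightarrow> ((real^'n^'n) \<Rightarrow>\<^sub>L ((real^'n^'n) \<Rightarrow>\<^sub>L real))"
    and f :: "real^'r^'n \<Rightarrow> real"
    and f' :: "real^'r^'n \<Rightarrow> ((real^'r^'n) \<Rightarrow>\<^sub>L real)"
    and f'' :: "real^'r^'n \<Rightarrow> ((real^'r^'n) \<Rightarrow>\<^sub>L ((real^'r^'n) \<Rightarrow>\<^sub>L real))"
    and X Xs :: "real^'r^'n"
    and eps_g eps_H eps_lambda :: real
  assumes phi_d1: "\<And>Y. (\<phi> has_derivative blinfun_apply (\<phi>' Y)) (at Y)"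
    and phi_d2: "\<And>Y. (\<phi>' has_derivative blinfun_apply (\<phi>'' Y)) (at Y)"
    and phi_convex: "convex_on UNIV \<phi>"
    and f_def: "\<And>Z. f Z = \<phi> (Z ** transpose Z)"
    and f_d1: "\<And>Z. (f has_derivative blinfun_apply (f' Z)) (at Z)"
    and f_d2: "\<And>Z. (f' has_derivative blinfun_apply (f'' Z)) (at Z)"
    and Xs_min: "\<And>Z. f Xs \<le> f Z"
    and eps_nonneg: "eps_g \<ge> 0" "eps_H \<ge> 0" "eps_lambda \<ge> 0"
    and lam: "lambda_min (transpose X ** X) \<le> eps_lambda"
    and grad: "\<And>V. f' X V \<le> eps_g * norm V"
    and hess: "\<And>V. f'' X V V \<ge> - eps_H * (norm V)\<^sup>2"
  shows "f X - f Xs \<le> (1/2 * norm X) * eps_g + (1/2 * (norm Xs)\<^sup>2) * eps_H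
           + (2 * norm (\<phi>'' (X ** transpose X)) * (norm Xs)\<^sup>2) * eps_lambda"
proof -
  define L where "L = \<phi>' (X ** transpose X)"
  define H where "H = \<phi>'' (X ** transpose X)"
  have grad_eq: "f' X V = L (X ** transpose V + V ** transpose X)" for V
    unfolding L_def by (rule derivative_comp_gram_eq[OF f_def phi_d1 f_d1])
  have hess_eq: "f'' X V V = H (X ** transpose V + V ** transpose X) (X ** transpose V + V ** transpose X)
      + 2 * L (V ** transpose V)" for V
    using second_derivative_comp_gram_eq[OF f_def phi_d1 phi_d2 f_d1 f_d2]
    by (simp add: L_def H_def blinfun.add_right)
  have first_order: "2 * L (X ** transpose X) \<le> eps_g * norm X"
    using grad[of X] unfolding grad_eq blinfun.add_right by linarith
  have convexity: "f X - f Xs \<le> L (X ** transpose X) - L (Xs ** transpose Xs)"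
    using convex_on_has_derivative_ge[OF phi_convex phi_d1, of "X ** transpose X" "Xs ** transpose Xs"]
    by (simp add: f_def L_def blinfun.diff_right)
  have second_order: "- 2 * L (Xs ** transpose Xs)
      \<le> (eps_H + 4 * lambda_min (transpose X ** X) * norm H) * (norm Xs)\<^sup>2"
    by (rule gram_lower_bound_of_hessian_lower_bound) (use hess in \<open>simp add: hess_eq\<close>)
  have "lambda_min (transpose X ** X) * (norm H * (norm Xs)\<^sup>2) \<le> eps_lambda * (norm H * (norm Xs)\<^sup>2)"
    by (intro mult_right_mono lam) simp
  with first_order convexity second_order show ?thesis
    by (simp add: H_def algebra_simps)
qed

end
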